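(* Let $a,r$ be positive integers and let $a_n=a+(n-1)r$ for $n\ge 1$. Then the sequence $(\Gamma(a_n,a_{n+1}))_{n\ge 1}$ is either $1,2,1,2,\ldots$ or $2,1,2,1,\ldots$.
   Context: For relatively prime positive integers $p,q$, exactly one of the equations $px+qy=\frac{(p-1)(q-1)}{2}$ (Equation 1) and $px+qy+1=\frac{(p-1)(q-1)}{2}$ (Equation 2) has a solution in nonnegative integers $(x,y)$. For positive integers $a,b$ with $d=\gcd(a,b)$, $\Gamma(a,b)=1$ if Equation 1 with $(p,q)=(a/d,b/d)$ has a nonnegative integer solution, and $\Gamma(a,b)=2$ otherwise. *)

theory Defs
  imports Main
begin

text \<open>Equation 1 for coprime p, q: p x + q y = (p-1)(q-1)/2 has a solution in
  nonnegative integers. For coprime p, q the number (p-1)(q-1) is even, so the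
  natural-number division is exact.\<close>
definition eq1_solvable :: "nat \<Rightarrow> nat \<Rightarrow> bool" where
  "eq1_solvable p q \<longleftrightarrow> (\<exists>x y :: nat. p * x + q * y = ((p - 1) * (q - 1)) div 2)"

definition Gamma :: "nat \<Rightarrow> nat \<Rightarrow> nat" where
  "Gamma a b = (let d = gcd a b in if eq1_solvable (a div d) (b div d) then 1 else 2)"

end

theory Submission
  imports Defs
begin

(* For coprime p, q > 0 the equation p X + q Y = p q + 1 has exactly one solution in
   positive integers, and Equation 1 is solvable iff both X and Y are odd (substitute
   X = 2 x + 1, Y = 2 y + 1). Passing from (p, q) to (q, 2 q - p), the positive solution
   becomes (2 X + Y - p, q - X), and a parity count shows that exactly one of the two
   pairs has an all-odd solution. After dividing out gcd a r, consecutive pairs of the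
   progression are related by exactly this move, so Gamma alternates. *)

lemma coprime_imp_even_pred_mult_pred:
  fixes p q :: nat
  assumes "coprime p q"
  shows "even ((p - 1) * (q - 1))"
proof -
  have "odd p \<or> odd q"
    using assms by auto
  then show ?thesis
    by (auto elim!: oddE)
qed

lemma eq1_solution_iff:
  fixes p q x y :: nat
  assumes "coprime p q" "0 < p" "0 < q"
  shows "p * x + q * y = (p - 1) * (q - 1) div 2
     \<longleftrightarrow> p * (2 * x + 1) + q * (2 * y + 1) = p * q + 1"
proof -
  define N where "N = (p - 1) * (q - 1) div 2"
  have "2 * N = (p - 1) * (q - 1)"
    unfolding N_def using coprime_imp_even_pred_mult_pred[OF assms(1)] by simp
  then have "2 * N + p + q = p * q + 1"
    using assms(2,3) by (cases p; cases q) (simp_all add: algebra_simps)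
  moreover have "p * (2 * x + 1) + q * (2 * y + 1) = 2 * (p * x + q * y) + p + q"
    by (simp add: algebra_simps)
  ultimately show ?thesis
    unfolding N_def[symmetric] by presburger
qed

lemma positive_solution_exists:
  fixes p q :: nat
  assumes "coprime p q" "0 < p" "0 < q"
  shows "\<exists>X Y. 0 < X \<and> 0 < Y \<and> p * X + q * Y = p * q + 1"
proof (cases "q = 1")
  case True
  then show ?thesis by auto
next
  case False
  obtain x y where "p * x = q * y + 1"
    using bezout_nat[of p q] assms by auto
  define X where "X = x mod q"
  define k where "k = p * X div q"
  have "p * X mod q = 1"
    unfolding X_def using \<open>p * x = q * y + 1\<close> \<open>q \<noteq> 1\<close> \<open>0 < q\<close>
    by (metis mod_mult_right_eq mod_mult_self4 mod_less One_nat_def Suc_lessI)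
  then have pX: "p * X = q * k + 1"
    unfolding k_def by (metis div_mult_mod_eq mult.commute)
  have "X < q"
    unfolding X_def using \<open>0 < q\<close> by simp
  then have "q * k < q * p"
    using pX \<open>0 < p\<close> by (metis add_lessD1 mult.commute mult_less_cancel1)
  then have "k < p"
    by simp
  have "0 < X"
    using pX by (cases X) auto
  moreover have "p * X + q * (p - k) = p * q + 1"
    using pX \<open>k < p\<close> by (simp add: diff_mult_distrib2 mult.commute)
  ultimately show ?thesis
    using \<open>k < p\<close> by (intro exI[of _ X] exI[of _ "p - k"]) auto
qed

lemma positive_solution_le:
  fixes p q X Y :: nat
  assumes "p * X + q * Y = p * q + 1" "0 < p" "0 < q" "0 < Y"
  shows "X \<le> q"
proof (rule ccontr)
  assume "\<not> X \<le> q"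
  then have "p * q + p \<le> p * X"
    using mult_le_mono2[of "q + 1" X p] by (simp add: algebra_simps)
  moreover have "q \<le> q * Y"
    using \<open>0 < Y\<close> by simp
  ultimately show False
    using assms(1,2,3) by linarith
qed

lemma positive_solution_unique:
  fixes p q X Y X' Y' :: nat
  assumes "coprime p q" "0 < p" "0 < q"
    and "p * X + q * Y = p * q + 1" "0 < X" "0 < Y"
    and "p * X' + q * Y' = p * q + 1" "0 < X'" "0 < Y'"
  shows "X = X' \<and> Y = Y'"
proof -
  have "int p * (int X - int X') = int q * (int Y' - int Y)"
    using assms(4,7) by (simp add: algebra_simps flip: of_nat_mult of_nat_add)
  then have "int q dvd int p * (int X - int X')"
    by simp
  then have q_dvd: "int q dvd int X - int X'"
    using \<open>coprime p q\<close> by (simp add: coprime_commute coprime_dvd_mult_right_iff)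
  have "\<bar>int X - int X'\<bar> < int q"
    using positive_solution_le[OF assms(4,2,3,6)] positive_solution_le[OF assms(7,2,3,9)] assms(5,8)
    by linarith
  then have "X = X'"
    using dvd_imp_le_int[OF _ q_dvd] by fastforce
  with assms(4,7) have "q * Y = q * Y'"
    by (metis add_left_cancel)
  with \<open>0 < q\<close> \<open>X = X'\<close> show ?thesis
    by simp
qed

lemma eq1_solvable_iff_odd_solution:
  fixes p q X Y :: nat
  assumes "coprime p q" "0 < p" "0 < q"
    and "p * X + q * Y = p * q + 1" "0 < X" "0 < Y"
  shows "eq1_solvable p q \<longleftrightarrow> odd X \<and> odd Y"
proof
  assume "eq1_solvable p q"
  then obtain x y where "p * x + q * y = (p - 1) * (q - 1) div 2"
    unfolding eq1_solvable_def by blast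
  then have odd_sol: "p * (2 * x + 1) + q * (2 * y + 1) = p * q + 1"
    using eq1_solution_iff assms(1-3) by blast
  have "X = 2 * x + 1 \<and> Y = 2 * y + 1"
    using positive_solution_unique[OF assms(1-6) odd_sol] by simp
  then show "odd X \<and> odd Y"
    by simp
next
  assume "odd X \<and> odd Y"
  then obtain x y where "X = 2 * x + 1" "Y = 2 * y + 1"
    by (auto elim!: oddE)
  then show "eq1_solvable p q"
    unfolding eq1_solvable_def using eq1_solution_iff assms by blast
qed

lemma coprime_reflect:
  fixes p q :: nat
  assumes "coprime p q" "p \<le> 2 * q"
  shows "coprime q (2 * q - p)"
proof (rule coprimeI)
  fix c
  assume "c dvd q" "c dvd 2 * q - p"
  then have "c dvd 2 * q - (2 * q - p)"
    by (simp add: dvd_diff_nat)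
  with \<open>p \<le> 2 * q\<close> have "c dvd p"
    by simp
  with \<open>c dvd q\<close> \<open>coprime p q\<close> show "is_unit c"
    using coprime_common_divisor by blast
qed

lemma eq1_solvable_reflect:
  fixes p q :: nat
  assumes "coprime p q" "0 < p" "p < q"
  shows "eq1_solvable q (2 * q - p) \<longleftrightarrow> \<not> eq1_solvable p q"
proof -
  obtain X Y where sol: "p * X + q * Y = p * q + 1" "0 < X" "0 < Y"
    using positive_solution_exists assms by (metis order.strict_trans)
  have "X \<noteq> q"
    using sol(1) assms(2,3) by auto
  with positive_solution_le[OF sol(1)] assms sol(3) have "X < q"
    by simp
  have sol_int: "int p * int X + int q * int Y = int p * int q + 1"
    using sol(1) by (metis of_nat_add of_nat_mult of_nat_1)
  then have "int q * (2 * int X + int Y - int p) = (2 * int q - int p) * int X + 1"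
    by (simp add: algebra_simps)
  moreover have "0 < (2 * int q - int p) * int X + 1"
    using assms(3) by simp
  ultimately have "0 < int q * (2 * int X + int Y - int p)"
    by linarith
  then have "p < 2 * X + Y"
    by (simp add: zero_less_mult_iff)
  define s X' Y' where "s = 2 * q - p" and "X' = 2 * X + Y - p" and "Y' = q - X"
  have "int q * int X' + int s * int Y' = int q * int s + 1"
    unfolding s_def X'_def Y'_def using sol_int \<open>p < 2 * X + Y\<close> \<open>X < q\<close> assms(3)
    by (simp add: of_nat_diff algebra_simps)
  then have sol': "q * X' + s * Y' = q * s + 1"
    by (metis of_nat_add of_nat_mult of_nat_1 of_nat_eq_iff)
  have "0 < X'" "0 < Y'" "0 < s"
    unfolding s_def X'_def Y'_def using \<open>p < 2 * X + Y\<close> \<open>X < q\<close> assms(3) by auto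
  have "eq1_solvable p q \<longleftrightarrow> odd X \<and> odd Y"
    using eq1_solvable_iff_odd_solution assms sol by simp
  moreover have "coprime q s"
    unfolding s_def using coprime_reflect assms by simp
  then have "eq1_solvable q s \<longleftrightarrow> odd X' \<and> odd Y'"
    using eq1_solvable_iff_odd_solution[OF _ _ _ sol'] assms \<open>0 < X'\<close> \<open>0 < Y'\<close> \<open>0 < s\<close>
    by simp
  moreover have "odd X' \<and> odd Y' \<longleftrightarrow> \<not> (odd X \<and> odd Y)"
  proof -
    have "X' + p = 2 * X + Y" "Y' + X = q"
      unfolding X'_def Y'_def using \<open>p < 2 * X + Y\<close> \<open>X < q\<close> by simp_all
    then have "even X' \<longleftrightarrow> (even Y \<longleftrightarrow> even p)" "even Y' \<longleftrightarrow> (even X \<longleftrightarrow> even q)"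
      by (metis even_add even_mult_iff dvd_triv_left)+
    moreover have "even (p * X + q * Y) \<longleftrightarrow> odd (p * q)"
      using sol(1) by simp
    moreover have "odd p \<or> odd q"
      using assms(1) by auto
    ultimately show ?thesis
      by auto
  qed
  ultimately show ?thesis
    unfolding s_def by blast
qed

lemma coprime_consecutive_terms:
  fixes a r m :: nat
  assumes "coprime a r"
  shows "coprime (a + m * r) (a + Suc m * r)"
proof -
  have "gcd (a + m * r) (a + Suc m * r) = gcd (a + m * r) r"
    using gcd_add2[of "a + m * r" r] by (simp add: ac_simps)
  also have "\<dots> = gcd r a"
    using gcd_add_mult[of r m a] by (simp add: gcd.commute add.commute)
  finally have "gcd (a + m * r) (a + Suc m * r) = gcd r a" .
  with assms show ?thesis
    by (simp add: coprime_iff_gcd_eq_1 gcd.commute)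
qed

lemma eq1_solvable_consecutive_terms:
  fixes a r m :: nat
  assumes "coprime a r" "0 < a" "0 < r"
  shows "eq1_solvable (a + m * r) (a + Suc m * r) \<longleftrightarrow> (eq1_solvable a (a + r) \<longleftrightarrow> even m)"
proof (induction m)
  case 0
  then show ?case
    by simp
next
  case (Suc m)
  have "0 < a + m * r" "a + m * r < a + Suc m * r"
    using assms(2,3) by simp_all
  then have "eq1_solvable (a + Suc m * r) (2 * (a + Suc m * r) - (a + m * r))
      \<longleftrightarrow> \<not> eq1_solvable (a + m * r) (a + Suc m * r)"
    by (rule eq1_solvable_reflect[OF coprime_consecutive_terms[OF assms(1)]])
  moreover have "2 * (a + Suc m * r) - (a + m * r) = a + Suc (Suc m) * r"
    by simp
  ultimately have "eq1_solvable (a + Suc m * r) (a + Suc (Suc m) * r)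
      \<longleftrightarrow> \<not> eq1_solvable (a + m * r) (a + Suc m * r)"
    by (simp only:)
  with Suc.IH show ?case
    by simp
qed

lemma Gamma_mult:
  fixes d x y :: nat
  assumes "0 < d"
  shows "Gamma (d * x) (d * y) = Gamma x y"
  using assms by (simp add: Gamma_def flip: gcd_mult_distrib_nat)

lemma Gamma_coprime:
  fixes x y :: nat
  assumes "coprime x y"
  shows "Gamma x y = (if eq1_solvable x y then 1 else 2)"
  using assms by (simp add: Gamma_def)

theorem theorem1p6:
  fixes a r :: nat
  assumes "0 < a" and "0 < r"
  shows "(\<forall>n\<ge>1. Gamma (a + (n - 1) * r) (a + n * r) = (if odd n then 1 else 2))
       \<or> (\<forall>n\<ge>1. Gamma (a + (n - 1) * r) (a + n * r) = (if odd n then 2 else 1))"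
proof -
  define d where "d = gcd a r"
  obtain a' r' where "a = a' * d" "r = r' * d" "coprime a' r'"
    using gcd_coprime_exists[of a r] assms unfolding d_def by auto
  with assms have "0 < d" "0 < a'" "0 < r'"
    by auto
  have "Gamma (a + m * r) (a + Suc m * r) = (if eq1_solvable a' (a' + r') \<longleftrightarrow> even m then 1 else 2)"
    for m
  proof -
    have "a + m * r = d * (a' + m * r')" "a + Suc m * r = d * (a' + Suc m * r')"
      using \<open>a = a' * d\<close> \<open>r = r' * d\<close> by (simp_all add: algebra_simps)
    then have "Gamma (a + m * r) (a + Suc m * r) = Gamma (a' + m * r') (a' + Suc m * r')"
      using Gamma_mult[OF \<open>0 < d\<close>] by simp
    then show ?thesis
      using Gamma_coprime coprime_consecutive_terms eq1_solvable_consecutive_terms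
        \<open>coprime a' r'\<close> \<open>0 < a'\<close> \<open>0 < r'\<close> by simp
  qed
  then have "Gamma (a + (n - 1) * r) (a + n * r) = (if eq1_solvable a' (a' + r') \<longleftrightarrow> odd n then 1 else 2)"
    if "n \<ge> 1" for n
    using that by (cases n) auto
  then show ?thesis
    by (cases "eq1_solvable a' (a' + r')") auto
qed

end
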